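(* Let $f:\mathbb{R}^n\to\mathbb{R}$ be convex and $\beta$-smooth, let $x^k\in\mathbb{R}^n$, and let $\hat f^k:\mathbb{R}^n\to\mathbb{R}$ satisfy: (a) $\hat f^k$ is convex; (b) $\hat f^k(x)\ge f(x^k)+\langle\nabla f(x^k),x-x^k\rangle$ for all $x$; (c) $\hat f^k(x)\le f(x)$ for all $x$. Then for all $x\in\mathbb{R}^n$, $$f(x)\le \hat f^k(x)+\tfrac{\beta}{2}\|x-x^k\|^2,$$ and $$\|\hat g-\nabla f(x)\|\le\beta\|x-x^k\|\quad\text{for all }\hat g\in\partial\hat f^k(x).$$
   Context: $f$ is $\beta$-smooth means differentiable with $\|\nabla f(x)-\nabla f(y)\|\le\beta\|x-y\|$ for all $x,y$. $\|\cdot\|$ is the Euclidean norm. *)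

theory Defs
  imports "HOL-Analysis.Analysis"
begin

definition subdifferential :: "('a::real_inner \<Rightarrow> real) \<Rightarrow> 'a \<Rightarrow> 'a set" where
  "subdifferential h x = {g. \<forall>y. h y \<ge> h x + inner g (y - x)}"

definition smooth_with_gradient :: "real \<Rightarrow> ('a::real_inner \<Rightarrow> real) \<Rightarrow> ('a \<Rightarrow> 'a) \<Rightarrow> bool" where
  "smooth_with_gradient beta f gradf \<longleftrightarrow>
     (\<forall>x. (f has_derivative (\<lambda>y. inner (gradf x) y)) (at x)) \<and>
     (\<forall>x y. norm (gradf x - gradf y) \<le> beta * norm (x - y))"

end

theory Submission
  imports Defs
begin

text \<open>The first bound is the descent lemma
  \<open>f y \<le> f x + \<langle>\<nabla>f x, y - x\<rangle> + \<beta>/2 \<parallel>y - x\<parallel>\<^sup>2\<close> at \<open>x = xk\<close>, combined with (b).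
  For the second, let g be a subgradient of fk at x and \<open>d = g - \<nabla>f x\<close>. Sandwiching
  \<open>fk (x + t d)\<close> between the supporting hyperplane of fk at x and the quadratic upper model
  of f at x, and using \<open>f x \<le> fk x + \<epsilon>\<close> with \<open>\<epsilon> = \<beta>/2 \<parallel>x - xk\<parallel>\<^sup>2\<close>, gives
  \<open>t \<parallel>d\<parallel>\<^sup>2 \<le> \<epsilon> + \<beta>/2 t\<^sup>2 \<parallel>d\<parallel>\<^sup>2\<close> for all t; the choice \<open>t = 1/\<beta>\<close> yields
  \<open>\<parallel>d\<parallel>\<^sup>2 \<le> 2\<beta>\<epsilon> = (\<beta> \<parallel>x - xk\<parallel>)\<^sup>2\<close>.\<close>

lemma smooth_with_gradient_nonneg:
  fixes f :: "'a::euclidean_space \<Rightarrow> real"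
  assumes "smooth_with_gradient beta f gradf"
  shows "beta \<ge> 0"
proof -
  obtain e :: 'a where "e \<in> Basis" using nonempty_Basis by blast
  then have "norm (gradf e - gradf 0) \<le> beta"
    using assms unfolding smooth_with_gradient_def by (metis diff_zero mult.right_neutral norm_Basis)
  then show ?thesis by (rule order_trans[OF norm_ge_zero])
qed

lemma smooth_with_gradient_line_derivative:
  fixes f :: "'a::real_inner \<Rightarrow> real"
  assumes "smooth_with_gradient beta f gradf"
  shows "((\<lambda>t. f (x + t *\<^sub>R h)) has_real_derivative inner (gradf (x + t *\<^sub>R h)) h) (at t)"
proof -
  have line: "((\<lambda>t. x + t *\<^sub>R h) has_derivative (\<lambda>s. s *\<^sub>R h)) (at t)"
    by (auto intro!: derivative_eq_intros)
  have "(f has_derivative (\<lambda>v. inner (gradf (x + t *\<^sub>R h)) v)) (at (x + t *\<^sub>R h))"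
    using assms unfolding smooth_with_gradient_def by blast
  from has_derivative_compose[OF line this]
  have "((\<lambda>t. f (x + t *\<^sub>R h)) has_derivative
      (\<lambda>s. inner (gradf (x + t *\<^sub>R h)) (s *\<^sub>R h))) (at t)" .
  then show ?thesis
    by (simp add: has_field_derivative_def mult_commute_abs)
qed

lemma smooth_with_gradient_descent:
  fixes f :: "'a::real_inner \<Rightarrow> real"
  assumes sm: "smooth_with_gradient beta f gradf"
  shows "f y \<le> f x + inner (gradf x) (y - x) + beta / 2 * (norm (y - x))\<^sup>2"
proof -
  define h where "h = y - x"
  define \<phi> where
    "\<phi> t = f (x + t *\<^sub>R h) - t * inner (gradf x) h - beta / 2 * t\<^sup>2 * (norm h)\<^sup>2" for t
  have \<phi>_deriv: "(\<phi> has_real_derivative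
      inner (gradf (x + t *\<^sub>R h) - gradf x) h - beta * t * (norm h)\<^sup>2) (at t)" for t
    unfolding \<phi>_def inner_diff_left
    by (rule derivative_eq_intros smooth_with_gradient_line_derivative[OF sm] | simp)+
  have "\<phi> 1 \<le> \<phi> 0"
  proof (rule DERIV_nonpos_imp_nonincreasing[of 0 1 \<phi>])
    fix t :: real assume "0 \<le> t"
    have "inner (gradf (x + t *\<^sub>R h) - gradf x) h \<le> norm (gradf (x + t *\<^sub>R h) - gradf x) * norm h"
      by (rule Cauchy_Schwarz_ineq2[THEN order_trans[OF abs_ge_self]])
    also have "\<dots> \<le> beta * norm ((x + t *\<^sub>R h) - x) * norm h"
      using sm unfolding smooth_with_gradient_def by (intro mult_right_mono norm_ge_zero) blast
    also have "\<dots> = beta * t * (norm h)\<^sup>2"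
      using \<open>0 \<le> t\<close> by (simp add: power2_eq_square)
    finally show "\<exists>D. (\<phi> has_real_derivative D) (at t) \<and> D \<le> 0"
      using \<phi>_deriv by force
  qed simp
  then show ?thesis unfolding \<phi>_def h_def by simp
qed

lemma linear_le_quadratic_bound:
  fixes s e beta :: real
  assumes le: "\<And>t. t * s \<le> e + beta / 2 * t\<^sup>2 * s"
    and "beta \<ge> 0" and "s \<ge> 0"
  shows "s \<le> 2 * beta * e"
proof (cases "beta = 0")
  case True
  have "s = 0"
  proof (rule ccontr)
    assume "s \<noteq> 0"
    with le[of "(\<bar>e\<bar> + 1) / s"] True show False by simp
  qed
  with True show ?thesis by simp
next
  case False
  with \<open>beta \<ge> 0\<close> have "beta > 0" by simp
  with le[of "1 / beta"] show ?thesis by (simp add: field_simps power2_eq_square)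
qed

lemma subgradient_near_gradient:
  fixes f h :: "'a::real_inner \<Rightarrow> real"
  assumes sm: "smooth_with_gradient beta f gradf" and "beta \<ge> 0"
    and below: "\<And>y. h y \<le> f y"
    and gap: "f x \<le> h x + e"
    and g: "g \<in> subdifferential h x"
  shows "(norm (g - gradf x))\<^sup>2 \<le> 2 * beta * e"
proof (rule linear_le_quadratic_bound[OF _ \<open>beta \<ge> 0\<close>])
  fix t :: real
  define d where "d = g - gradf x"
  let ?y = "x + t *\<^sub>R d"
  have "h x + inner g (?y - x) \<le> h ?y"
    using g unfolding subdifferential_def by blast
  also have "\<dots> \<le> f x + inner (gradf x) (?y - x) + beta / 2 * (norm (?y - x))\<^sup>2"
    by (rule order_trans[OF below smooth_with_gradient_descent[OF sm]])
  finally have "inner d (?y - x) \<le> e + beta / 2 * (norm (?y - x))\<^sup>2"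
    using gap unfolding d_def inner_diff_left by linarith
  then show "t * (norm d)\<^sup>2 \<le> e + beta / 2 * t\<^sup>2 * (norm d)\<^sup>2"
    by (simp add: dot_square_norm power_mult_distrib mult.assoc)
qed simp

theorem lemma3:
  fixes f fk :: "'n::euclidean_space \<Rightarrow> real" and gradf :: "'n \<Rightarrow> 'n"
    and beta :: real and xk :: 'n
  assumes f_convex: "convex_on UNIV f"
    and f_smooth: "smooth_with_gradient beta f gradf"
    and a: "convex_on UNIV fk"
    and b: "\<And>x. fk x \<ge> f xk + inner (gradf xk) (x - xk)"
    and c: "\<And>x. fk x \<le> f x"
  shows "(\<forall>x. f x \<le> fk x + beta / 2 * (norm (x - xk))\<^sup>2) \<and>
         (\<forall>x. \<forall>g \<in> subdifferential fk x. norm (g - gradf x) \<le> beta * norm (x - xk))"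
proof (intro conjI allI ballI)
  have upper: "f x \<le> fk x + beta / 2 * (norm (x - xk))\<^sup>2" for x
    using smooth_with_gradient_descent[OF f_smooth, of x xk] b[of x] by simp
  then show "f x \<le> fk x + beta / 2 * (norm (x - xk))\<^sup>2" for x .
  have beta: "beta \<ge> 0" using smooth_with_gradient_nonneg[OF f_smooth] .
  fix x g assume "g \<in> subdifferential fk x"
  then have "(norm (g - gradf x))\<^sup>2 \<le> 2 * beta * (beta / 2 * (norm (x - xk))\<^sup>2)"
    using subgradient_near_gradient[OF f_smooth beta c upper] by blast
  also have "\<dots> = (beta * norm (x - xk))\<^sup>2" by (simp add: power2_eq_square)
  finally show "norm (g - gradf x) \<le> beta * norm (x - xk)"
    by (rule power2_le_imp_le) (simp add: beta)
qed

end
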